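(* Let $G$ be an Abelian group and $(\rho,V)$ a linear representation of $G$ on a finite-dimensional vector space $V$ over a field $k$. Let $A$ be a nonempty finite subset of $G$ and $Y\neq\{0\}$ a $k$-subspace of $V$ with $\dim(A\cdot Y)\leq\alpha\dim(Y)$ for some $\alpha\in\mathbb{R}_{\geq0}$. Then there exists a $k$-subspace $Z\neq\{0\}$ of $Y$ such that $\dim(AC\cdot Z)\leq\alpha\dim(C\cdot Z)$ for every finite subset $C$ of $G$.
   Context: $g\cdot v=\rho(g)v$; for $S\subset G$ and a subspace $Z$, $S\cdot Z$ denotes the $k$-span of $\{s\cdot z\mid s\in S,z\in Z\}$; $AC=\{ac\mid a\in A,c\in C\}$. *)

theory Defs
  imports Complex_Main
begin

definition act_span ::
  "('k::field \<Rightarrow> 'v::ab_group_add \<Rightarrow> 'v) \<Rightarrow> ('g \<Rightarrow> 'v \<Rightarrow> 'v) \<Rightarrow> 'g set \<Rightarrow> 'v set \<Rightarrow> 'v set"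
  where "act_span scale rho S Z = module.span scale {rho s z | s z. s \<in> S \<and> z \<in> Z}"

text \<open>Product set AC (the group is written additively).\<close>
definition set_prod :: "'g::ab_group_add set \<Rightarrow> 'g set \<Rightarrow> 'g set"
  where "set_prod A C = {a + c | a c. a \<in> A \<and> c \<in> C}"

definition is_rep ::
  "('k::field \<Rightarrow> 'v::ab_group_add \<Rightarrow> 'v) \<Rightarrow> ('g::ab_group_add \<Rightarrow> 'v \<Rightarrow> 'v) \<Rightarrow> bool"
  where "is_rep scale rho \<longleftrightarrow>
     (\<forall>g. Vector_Spaces.linear scale scale (rho g)) \<and>
     rho 0 = id \<and> (\<forall>g h. rho (g + h) = rho g \<circ> rho h)"

end

theory Submission imports Defs begin

(* Among the nonzero subspaces Z of Y choose one minimising K = dim (A\<cdot>Z) / dim Z;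
   testing Z = Y gives K \<le> \<alpha>. Petridis' argument then shows dim (AC\<cdot>Z) \<le> K dim (C\<cdot>Z)
   by adding the elements g of C one at a time. The key object is the subspace
   Z' = {z \<in> Z. (g + A)\<cdot>z \<subseteq> AC\<cdot>Z}: the translate g\<cdot>(A\<cdot>Z') lies in the overlap of
   AC\<cdot>Z with the new part (g + A)\<cdot>Z, so by minimality that overlap has dimension at
   least K dim Z', while the overlap of C\<cdot>Z with g\<cdot>Z lies in g\<cdot>Z'. The dimension formula
   dim (U + W) = dim U + dim W - dim (U \<inter> W) for both sums closes the induction. *)

lemma (in vector_space) finite_dimensional_if_finite_span:
  assumes "finite S" and "span S = UNIV"
  shows "\<exists>Basis. finite_dimensional_vector_space scale Basis"
proof -
  obtain B where B: "independent B" "UNIV \<subseteq> span B"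
    using basis_exists[of UNIV] by blast
  have "finite B"
    using independent_span_bound[OF assms(1) B(1)] assms(2) by blast
  then have "finite_dimensional_vector_space scale B"
    by unfold_locales (use B in auto)
  then show ?thesis ..
qed

context finite_dimensional_vector_space begin

lemma dim_linear_inj_image:
  assumes "Vector_Spaces.linear scale scale f" and "inj f"
  shows "dim (f ` S) = dim S"
proof -
  interpret finite_dimensional_vector_space_pair_1 scale Basis scale
    by unfold_locales
  show ?thesis
    using dim_image_eq[OF assms(1)] assms(2) by (meson inj_on_subset subset_UNIV)
qed

lemma dim_pos_iff_nonzero_subspace:
  assumes "subspace Z"
  shows "0 < dim Z \<longleftrightarrow> Z \<noteq> {0}"
  using subspace_0[OF assms] by (simp add: zero_less_iff_neq_zero) blast

lemma exists_subspace_min_ratio: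
  fixes f :: "'b set \<Rightarrow> nat"
  assumes Y: "subspace Y" "Y \<noteq> {0}" and bounded: "\<And>Z. f Z \<le> N"
  obtains Z K where "subspace Z" "Z \<subseteq> Y" "Z \<noteq> {0}" "0 \<le> K"
    "real (f Z) = K * real (dim Z)"
    "\<And>Z'. subspace Z' \<Longrightarrow> Z' \<subseteq> Y \<Longrightarrow> K * real (dim Z') \<le> real (f Z')"
proof -
  define S where "S = {Z. subspace Z \<and> Z \<subseteq> Y \<and> Z \<noteq> {0}}"
  define r where "r Z = real (f Z) / real (dim Z)" for Z
  have "r ` S \<subseteq> (\<lambda>(p, q). real p / real q) ` ({..N} \<times> {..dimension})"
    unfolding r_def using bounded dim_subset_UNIV by fastforce
  then have fin: "finite (r ` S)"
    by (rule finite_subset) simp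
  have "Y \<in> S"
    unfolding S_def using Y by blast
  then have "Min (r ` S) \<in> r ` S"
    using fin by (intro Min_in) auto
  then obtain Z where Z: "Z \<in> S" "r Z = Min (r ` S)" by (metis imageE)
  have dim_Z: "0 < dim Z"
    using Z(1) dim_pos_iff_nonzero_subspace unfolding S_def by blast
  show thesis
  proof
    show "subspace Z" "Z \<subseteq> Y" "Z \<noteq> {0}" "0 \<le> r Z"
      using Z(1) unfolding S_def r_def by auto
    show "real (f Z) = r Z * real (dim Z)"
      unfolding r_def using dim_Z by (simp del: dim_eq_0)
  next
    fix Z' assume Z': "subspace Z'" "Z' \<subseteq> Y"
    show "r Z * real (dim Z') \<le> real (f Z')"
    proof (cases "Z' = {0}")
      case False
      then have "r Z \<le> r Z'" and "0 < dim Z'"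
        using Z' Z(2) fin dim_pos_iff_nonzero_subspace by (auto simp: S_def)
      then show ?thesis
        unfolding r_def by (simp add: le_divide_eq)
    qed simp
  qed
qed

end

lemma set_prod_empty [simp]: "set_prod A {} = {}"
  by (simp add: set_prod_def)

lemma set_prod_insert: "set_prod A (insert g C) = set_prod A C \<union> (+) g ` A"
  unfolding set_prod_def by (auto simp: add.commute)

lemma translate_subset_set_prod: "a \<in> A \<Longrightarrow> (+) a ` C \<subseteq> set_prod A C"
  unfolding set_prod_def by auto

locale finite_dimensional_representation = finite_dimensional_vector_space +
  fixes rho :: "'g::ab_group_add \<Rightarrow> 'b \<Rightarrow> 'b"
  assumes is_rep: "is_rep scale rho"
begin

abbreviation act :: "'g set \<Rightarrow> 'b set \<Rightarrow> 'b set"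
  where "act S Z \<equiv> act_span scale rho S Z"

lemma linear_rho: "Vector_Spaces.linear scale scale (rho g)"
  using is_rep unfolding is_rep_def by blast

lemma module_hom_rho: "module_hom scale scale (rho g)"
  using linear_rho by (simp add: module_hom_iff_linear)

lemma rho_rho [simp]: "rho g (rho h x) = rho (g + h) x"
  using is_rep unfolding is_rep_def by simp

lemma rho_zero [simp]: "rho 0 x = x"
  using is_rep unfolding is_rep_def by simp

lemma inj_rho: "inj (rho g)"
  by (rule inj_on_inverseI[where g = "rho (- g)"]) simp

lemma dim_rho_image [simp]: "dim (rho g ` S) = dim S"
  by (rule dim_linear_inj_image[OF linear_rho inj_rho])

lemma subspace_act: "subspace (act S Z)"
  unfolding act_span_def by (rule subspace_span)

lemma act_mono: "S \<subseteq> S' \<Longrightarrow> Z \<subseteq> Z' \<Longrightarrow> act S Z \<subseteq> act S' Z'"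
  unfolding act_span_def by (rule span_mono) blast

lemma act_Un: "act (S \<union> T) Z = {x + y | x y. x \<in> act S Z \<and> y \<in> act T Z}"
proof -
  have "{rho s z | s z. s \<in> S \<union> T \<and> z \<in> Z} =
        {rho s z | s z. s \<in> S \<and> z \<in> Z} \<union> {rho s z | s z. s \<in> T \<and> z \<in> Z}"
    by blast
  then show ?thesis
    unfolding act_span_def by (simp add: span_Un)
qed

lemma rho_image_act: "rho g ` act S Z = act ((+) g ` S) Z"
proof -
  have "rho g ` {rho s z | s z. s \<in> S \<and> z \<in> Z} = {rho s z | s z. s \<in> (+) g ` S \<and> z \<in> Z}"
    (is "?L = ?R")
  proof (intro equalityI subsetI)
    fix x assume "x \<in> ?L"
    then obtain s z where "s \<in> S" "z \<in> Z" "x = rho (g + s) z" by auto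
    then show "x \<in> ?R" by blast
  next
    fix x assume "x \<in> ?R"
    then obtain s z where "s \<in> S" "z \<in> Z" "x = rho g (rho s z)" by auto
    then show "x \<in> ?L" by blast
  qed
  then show ?thesis
    unfolding act_span_def module_hom.span_image[OF module_hom_rho, symmetric] by simp
qed

lemma act_singleton: "subspace Z \<Longrightarrow> act {g} Z = rho g ` Z"
  using rho_image_act[of g "{0}" Z]
  by (simp add: act_span_def image_image span_eq_iff[THEN iffD2] Setcompr_eq_image)

lemma subspace_translates_in:
  assumes "subspace Z" and "subspace U"
  shows "subspace {z \<in> Z. \<forall>a\<in>A. rho (g + a) z \<in> U}"
  using assms module_hom.zero[OF module_hom_rho] module_hom.add[OF module_hom_rho]
    module_hom.scale[OF module_hom_rho]
  unfolding subspace_def by auto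

lemma rho_image_act_translates_in:
  assumes "subspace U"
  shows "rho g ` act A {z \<in> Z. \<forall>a\<in>A. rho (g + a) z \<in> U} \<subseteq> U \<inter> rho g ` act A Z"
proof -
  have "act ((+) g ` A) {z \<in> Z. \<forall>a\<in>A. rho (g + a) z \<in> U} \<subseteq> U"
    unfolding act_span_def by (rule span_minimal[OF _ assms]) blast
  moreover have "rho g ` act A {z \<in> Z. \<forall>a\<in>A. rho (g + a) z \<in> U} \<subseteq> rho g ` act A Z"
    by (intro image_mono act_mono) auto
  ultimately show ?thesis
    unfolding rho_image_act by blast
qed

lemma act_Int_rho_image_subset:
  "act C Z \<inter> rho g ` Z \<subseteq> rho g ` {z \<in> Z. \<forall>a\<in>A. rho (g + a) z \<in> act (set_prod A C) Z}"
proof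
  fix x assume x: "x \<in> act C Z \<inter> rho g ` Z"
  then obtain z where z: "z \<in> Z" "x = rho g z" by blast
  have "rho (g + a) z \<in> act (set_prod A C) Z" if "a \<in> A" for a
  proof -
    have "rho a x \<in> rho a ` act C Z"
      using x by blast
    also have "\<dots> \<subseteq> act (set_prod A C) Z"
      unfolding rho_image_act using that by (intro act_mono translate_subset_set_prod) auto
    finally show ?thesis
      using z by (simp add: add.commute)
  qed
  then show "x \<in> rho g ` {z \<in> Z. \<forall>a\<in>A. rho (g + a) z \<in> act (set_prod A C) Z}"
    using z by blast
qed

lemma dim_act_set_prod_le:
  assumes Z: "subspace Z" and K: "0 \<le> K"
    and ratio: "real (dim (act A Z)) = K * real (dim Z)"
    and minimal: "\<And>Z'. subspace Z' \<Longrightarrow> Z' \<subseteq> Z \<Longrightarrow> K * real (dim Z') \<le> real (dim (act A Z'))"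
    and "finite C"
  shows "real (dim (act (set_prod A C) Z)) \<le> K * real (dim (act C Z))"
  using \<open>finite C\<close>
proof (induction C rule: finite_induct)
  case (insert g C)
  define U where "U = act (set_prod A C) Z"
  define W where "W = rho g ` act A Z"
  define P where "P = act C Z"
  define Q where "Q = rho g ` Z"
  define Z' where "Z' = {z \<in> Z. \<forall>a\<in>A. rho (g + a) z \<in> U}"
  have subspaces: "subspace U" "subspace W" "subspace P" "subspace Q"
    unfolding U_def W_def P_def Q_def rho_image_act act_singleton[OF Z, symmetric]
    by (rule subspace_act)+
  have "K * real (dim Z') \<le> real (dim (act A Z'))"
    by (rule minimal) (use subspace_translates_in[OF Z subspaces(1)] in \<open>auto simp: Z'_def\<close>)
  also have "dim (act A Z') \<le> dim (U \<inter> W)"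
    using dim_subset[OF rho_image_act_translates_in[OF subspaces(1)]]
    by (simp add: Z'_def W_def)
  finally have lower: "K * real (dim Z') \<le> real (dim (U \<inter> W))" by simp
  have "dim (P \<inter> Q) \<le> dim Z'"
    using dim_subset[OF act_Int_rho_image_subset] by (simp add: P_def Q_def Z'_def U_def)
  then have upper: "K * real (dim (P \<inter> Q)) \<le> K * real (dim Z')"
    using K by (simp add: mult_left_mono)
  have "dim (act (set_prod A (insert g C)) Z) + dim (U \<inter> W) = dim U + dim (act A Z)"
    using dim_sums_Int[OF subspaces(1,2)] dim_rho_image[of g "act A Z"]
    unfolding set_prod_insert act_Un U_def W_def rho_image_act by simp
  moreover have "dim (act (insert g C) Z) + dim (P \<inter> Q) = dim P + dim Z"
    using dim_sums_Int[OF subspaces(3,4)] act_Un[of C "{g}" Z] act_singleton[OF Z]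
    by (simp add: P_def Q_def)
  ultimately have
    "real (dim (act (set_prod A (insert g C)) Z)) + real (dim (U \<inter> W))
       = real (dim U) + K * real (dim Z)"
    "real (dim (act (insert g C) Z)) + real (dim (P \<inter> Q)) = real (dim P) + real (dim Z)"
    using ratio by (metis of_nat_add)+
  moreover from this(2) have
    "K * real (dim (act (insert g C) Z))
       = K * real (dim P) + K * real (dim Z) - K * real (dim (P \<inter> Q))"
    by (metis add_diff_cancel_right' distrib_left)
  ultimately show ?case
    using insert.IH lower upper unfolding U_def P_def by linarith
qed (simp add: act_span_def)

end

theorem mainTheorem18:
  fixes scale :: "'k::field \<Rightarrow> 'v::ab_group_add \<Rightarrow> 'v"
    and rho :: "'g::ab_group_add \<Rightarrow> 'v \<Rightarrow> 'v"
    and A :: "'g set" and Y :: "'v set" and \<alpha> :: real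
  assumes vs: "vector_space scale"
    and fin_dim: "\<exists>B. finite B \<and> module.span scale B = UNIV"
    and rep: "is_rep scale rho"
    and A_fin: "finite A" and A_ne: "A \<noteq> {}"
    and Y_sub: "module.subspace scale Y" and Y_nz: "Y \<noteq> {0}"
    and alpha_nn: "\<alpha> \<ge> 0"
    and growth: "real (vector_space.dim scale (act_span scale rho A Y))
                   \<le> \<alpha> * real (vector_space.dim scale Y)"
  shows "\<exists>Z. module.subspace scale Z \<and> Z \<subseteq> Y \<and> Z \<noteq> {0} \<and>
           (\<forall>C. finite C \<longrightarrow>
              real (vector_space.dim scale (act_span scale rho (set_prod A C) Z))
                \<le> \<alpha> * real (vector_space.dim scale (act_span scale rho C Z)))"
proof -
  obtain Basis where "finite_dimensional_vector_space scale Basis"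
    using vector_space.finite_dimensional_if_finite_span[OF vs] fin_dim by blast
  then interpret finite_dimensional_representation scale Basis rho
    using rep
    by (intro finite_dimensional_representation.intro finite_dimensional_representation_axioms.intro)
  obtain Z K where Z: "subspace Z" "Z \<subseteq> Y" "Z \<noteq> {0}" "0 \<le> K"
      "real (dim (act A Z)) = K * real (dim Z)"
    and minimal: "\<And>Z'. subspace Z' \<Longrightarrow> Z' \<subseteq> Y \<Longrightarrow> K * real (dim Z') \<le> real (dim (act A Z'))"
    using exists_subspace_min_ratio[OF Y_sub Y_nz dim_subset_UNIV] by blast
  have "K * real (dim Y) \<le> \<alpha> * real (dim Y)"
    using minimal[OF Y_sub order_refl] growth by linarith
  then have "K \<le> \<alpha>"
    using dim_pos_iff_nonzero_subspace[OF Y_sub] Y_nz by simp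
  have "real (dim (act (set_prod A C) Z)) \<le> \<alpha> * real (dim (act C Z))" if "finite C" for C
  proof -
    have "real (dim (act (set_prod A C) Z)) \<le> K * real (dim (act C Z))"
      by (rule dim_act_set_prod_le[OF Z(1,4,5) _ that]) (meson minimal Z(2) order_trans)
    also have "\<dots> \<le> \<alpha> * real (dim (act C Z))"
      using \<open>K \<le> \<alpha>\<close> by (simp add: mult_right_mono)
    finally show ?thesis .
  qed
  then show ?thesis
    using Z by blast
qed

end
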